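(* Let $n\ge2$ be even and $1\le\kappa<n$. For $q\in\{2,4\}$ let $A_{\mathrm{BAL},\kappa\text{-WMU},q,n}$ denote the maximum size of a balanced $\kappa$-WMU code in $\mathbb{F}_q^n$, and let $A_{\mathrm{BAL},\mathrm{MU},2,n}$ denote the maximum size of a balanced MU code in $\mathbb{F}_2^n$. Then (i) $c_2\,\frac{\binom{n}{n/2}2^n}{n-\kappa+1}\le A_{\mathrm{BAL},\kappa\text{-WMU},4,n}\le\frac{\binom{n}{n/2}2^n}{n-\kappa+1}$, where $c_2=\frac{3}{64}$; (ii) $A_{\mathrm{BAL},\kappa\text{-WMU},2,n}\le\frac{\binom{n}{n/2}}{n-\kappa+1}$; (iii) $\frac{\binom{n}{n/2}}{2(n-1)}\le A_{\mathrm{BAL},\mathrm{MU},2,n}\le\frac{\binom{n}{n/2}}{n}$.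
   Context: $\mathbb{F}_2=\{0,1\}$ and $\mathbb{F}_4$ is identified with $\{\mathtt{A},\mathtt{T},\mathtt{C},\mathtt{G}\}$. A binary sequence of length $n$ is balanced if exactly $n/2$ entries are $1$; a quaternary (DNA) sequence of length $n$ is balanced if exactly $n/2$ entries lie in $\{\mathtt{G},\mathtt{C}\}$; a code is balanced if every codeword is. A code $\mathcal{C}\subseteq\mathbb{F}_q^n$ is $\kappa$-WMU if for all not necessarily distinct $\mathbf{a},\mathbf{b}\in\mathcal{C}$ and all $\kappa\le l<n$, $(a_1,\dots,a_l)\ne(b_{n-l+1},\dots,b_n)$; an MU (mutually uncorrelated) code is a $1$-WMU code, i.e. no proper prefix of any codeword equals a suffix of any codeword. *)

theory Defs
  imports Complex_Main
begin

(* Words of length n over F_q, with F_q identified with {0..<q}.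
   F_2 = {0,1}; F_4 = {A,T,C,G} identified with 0,1,2,3 (A=0,T=1,C=2,G=3). *)
definition words :: "nat \<Rightarrow> nat \<Rightarrow> nat list set" where
  "words q n = {x. length x = n \<and> set x \<subseteq> {0..<q}}"

(* "heavy" symbols: 1 for binary, {C,G} = {2,3} for DNA *)
definition heavy :: "nat \<Rightarrow> nat set" where
  "heavy q = (if q = 2 then {1} else {2,3})"

definition balanced_word :: "nat \<Rightarrow> nat list \<Rightarrow> bool" where
  "balanced_word q x \<longleftrightarrow> 2 * length (filter (\<lambda>c. c \<in> heavy q) x) = length x"

definition wmu :: "nat \<Rightarrow> nat \<Rightarrow> nat list set \<Rightarrow> bool" where
  "wmu \<kappa> n C \<longleftrightarrow> (\<forall>a\<in>C. \<forall>b\<in>C. \<forall>l. \<kappa> \<le> l \<longrightarrow> l < n \<longrightarrow> take l a \<noteq> drop (n - l) b)"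

definition mu :: "nat \<Rightarrow> nat list set \<Rightarrow> bool" where
  "mu n C \<longleftrightarrow> wmu 1 n C"

definition A_BAL_WMU :: "nat \<Rightarrow> nat \<Rightarrow> nat \<Rightarrow> nat" where
  "A_BAL_WMU q \<kappa> n = Max (card ` {C. C \<subseteq> words q n \<and> (\<forall>x\<in>C. balanced_word q x) \<and> wmu \<kappa> n C})"

definition A_BAL_MU :: "nat \<Rightarrow> nat \<Rightarrow> nat" where
  "A_BAL_MU q n = Max (card ` {C. C \<subseteq> words q n \<and> (\<forall>x\<in>C. balanced_word q x) \<and> mu n C})"

end

theory Submission
  imports Defs "HOL-Library.FuncSet"
begin

text \<open>
  Upper bounds: the balanced words are closed under cyclic rotation, and the rotations of a single
  word that lie in a \<open>\<kappa>\<close>-WMU code are cyclically at least \<open>n - \<kappa> + 1\<close> apart, since a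
  shorter shift would make a suffix of one codeword a prefix of another. Double counting the pairs
  (word, shift) landing in the code gives \<open>|C| (n - \<kappa> + 1) \<le>\<close> the number of balanced words.

  Lower bounds: balanced binary words all of whose proper prefixes contain fewer ones than zeros
  form an MU code, and by the cycle lemma every word with \<open>n/2 - 1\<close> ones among \<open>n - 1\<close>
  positions has a rotation that becomes such a word after appending a one. A DNA word is a pair of
  binary words: its G/C pattern and one further bit per position. Pairing balanced patterns with a
  binary \<open>\<kappa>\<close>-WMU code gives balanced \<open>\<kappa>\<close>-WMU DNA codes; for large \<open>\<kappa>\<close> the binary
  code consists of the words that start with the marker \<open>1\<^sup>k 0\<close>, \<open>2\<^sup>k \<ge> n - \<kappa> + 1\<close>, and do
  not repeat it within the first \<open>n - \<kappa> + 1\<close> shifts, while for small \<open>\<kappa>\<close> Dyck-type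
  patterns with an arbitrary second bit suffice.
\<close>


section \<open>Words, weights and rotations\<close>

lemma finite_words: "finite (words q n)"
  using finite_lists_length_eq[of "{0..<q}" n] by (simp add: words_def conj_commute)

lemma card_words: "card (words q n) = q ^ n"
  using card_lists_length_eq[of "{0..<q}" n] by (simp add: words_def conj_commute)

lemma nth_word_less: "x \<in> words q n \<Longrightarrow> i < n \<Longrightarrow> x ! i < q"
  by (auto simp: words_def dest!: nth_mem)

lemma length_filter_rotate [simp]: "length (filter P (rotate i xs)) = length (filter P xs)"
  by (metis append_take_drop_id filter_append length_append add.commute rotate_drop_take)

lemma count_list_rotate [simp]: "count_list (rotate i xs) x = count_list xs x"
  by (simp add: count_list_eq_length_filter)

lemma count_list_conv_length_filter: "count_list xs x = length (filter (\<lambda>c. c = x) xs)"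
  by (induction xs) auto

lemma balanced_word_rotate [simp]: "balanced_word q (rotate i x) \<longleftrightarrow> balanced_word q x"
  by (simp add: balanced_word_def)

lemma balanced_word_2_iff: "balanced_word 2 x \<longleftrightarrow> 2 * count_list x 1 = length x"
  by (simp add: balanced_word_def heavy_def count_list_conv_length_filter)

lemma card_words_count: "card {x \<in> words 2 n. count_list x 1 = k} = n choose k"
proof -
  let ?supp = "\<lambda>x::nat list. {i. i < n \<and> x ! i = 1}"
  let ?indicator = "\<lambda>B. map (\<lambda>i. if i \<in> B then 1 else 0) [0..<n] :: nat list"
  have "bij_betw ?supp {x \<in> words 2 n. count_list x 1 = k} {B. B \<subseteq> {0..<n} \<and> card B = k}"
  proof (rule bij_betwI[where g = ?indicator])
    show "?supp \<in> {x \<in> words 2 n. count_list x 1 = k} \<rightarrow> {B. B \<subseteq> {0..<n} \<and> card B = k}"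
      by (auto simp: words_def count_list_conv_length_filter length_filter_conv_card)
    show "?indicator \<in> {B. B \<subseteq> {0..<n} \<and> card B = k} \<rightarrow> {x \<in> words 2 n. count_list x 1 = k}"
    proof
      fix B assume B: "B \<in> {B. B \<subseteq> {0..<n} \<and> card B = k}"
      have "{i. i < length (?indicator B) \<and> ?indicator B ! i = 1} = B"
        using B by (auto split: if_splits)
      then show "?indicator B \<in> {x \<in> words 2 n. count_list x 1 = k}"
        using B by (auto simp: words_def count_list_conv_length_filter length_filter_conv_card)
    qed
    show "?indicator (?supp x) = x" if x: "x \<in> {x \<in> words 2 n. count_list x 1 = k}" for x
    proof (rule nth_equalityI)
      fix i assume i: "i < length (?indicator (?supp x))"
      with x have "x ! i < 2"
        by (auto simp: words_def dest!: nth_mem)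
      with i show "?indicator (?supp x) ! i = x ! i" by auto
    qed (use x in \<open>simp add: words_def\<close>)
    show "?supp (?indicator B) = B" if "B \<in> {B. B \<subseteq> {0..<n} \<and> card B = k}" for B
      using that by (auto split: if_splits)
  qed
  then show ?thesis
    by (simp add: bij_betw_same_card n_subsets)
qed

section \<open>Quaternary words as pairs of binary words\<close>

text \<open>With \<open>A, T, C, G\<close> encoded as \<open>0, 1, 2, 3\<close>, the high bit marks the heavy symbols \<open>C, G\<close>.\<close>

abbreviation high_bits :: "nat list \<Rightarrow> nat list" where
  "high_bits w \<equiv> map (\<lambda>c. c div 2) w"

abbreviation low_bits :: "nat list \<Rightarrow> nat list" where
  "low_bits w \<equiv> map (\<lambda>c. c mod 2) w"

lemma bij_betw_bits:
  "bij_betw (\<lambda>w. (high_bits w, low_bits w)) (words 4 n) (words 2 n \<times> words 2 n)"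
proof (rule bij_betwI[where g = "\<lambda>(x, y). map (\<lambda>(a, b). 2 * a + b) (zip x y)"])
  show "(\<lambda>w. (high_bits w, low_bits w)) \<in> words 4 n \<rightarrow> words 2 n \<times> words 2 n"
    by (auto simp: words_def subset_iff less_mult_imp_div_less)
  show "(\<lambda>(x, y). map (\<lambda>(a, b). 2 * a + b) (zip x y)) \<in> words 2 n \<times> words 2 n \<rightarrow> words 4 n"
  proof (clarsimp simp: words_def)
    fix x y :: "nat list" and a b
    assume "set x \<subseteq> {0..<2}" "set y \<subseteq> {0..<2}" "(a, b) \<in> set (zip x y)"
    then have "a < 2" "b < 2" by (auto dest: set_zip_leftD set_zip_rightD)
    then show "2 * a + b < 4" by linarith
  qed
  show "(\<lambda>(x, y). map (\<lambda>(a, b). 2 * a + b) (zip x y)) (high_bits w, low_bits w) = w" for w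
    by (rule nth_equalityI) simp_all
  fix p assume "p \<in> words 2 n \<times> words 2 n"
  then obtain x y where p: "p = (x, y)" and xy: "x \<in> words 2 n" "y \<in> words 2 n"
    by blast
  then have "x ! i < 2 \<and> y ! i < 2" if "i < n" for i
    using that by (auto intro: nth_word_less)
  with xy show "(\<lambda>w. (high_bits w, low_bits w)) ((\<lambda>(x, y). map (\<lambda>(a, b). 2 * a + b) (zip x y)) p) = p"
    unfolding p by (auto simp: words_def intro!: nth_equalityI)
qed

lemma card_words_4_bits:
  "card {w \<in> words 4 n. P (high_bits w) \<and> Q (low_bits w)}
     = card {x \<in> words 2 n. P x} * card {y \<in> words 2 n. Q y}"
proof -
  let ?f = "\<lambda>w. (high_bits w, low_bits w)"
  have "?f ` {w \<in> words 4 n. P (high_bits w) \<and> Q (low_bits w)}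
      = {x \<in> words 2 n. P x} \<times> {y \<in> words 2 n. Q y}"
  proof
    show "?f ` {w \<in> words 4 n. P (high_bits w) \<and> Q (low_bits w)}
        \<subseteq> {x \<in> words 2 n. P x} \<times> {y \<in> words 2 n. Q y}"
      using bij_betw_imp_surj_on[OF bij_betw_bits[of n]] by blast
    show "{x \<in> words 2 n. P x} \<times> {y \<in> words 2 n. Q y}
        \<subseteq> ?f ` {w \<in> words 4 n. P (high_bits w) \<and> Q (low_bits w)}"
    proof clarify
      fix x y assume "x \<in> words 2 n" "P x" "y \<in> words 2 n" "Q y"
      moreover obtain w where "w \<in> words 4 n" "(x, y) = ?f w"
        using bij_betw_imp_surj_on[OF bij_betw_bits[of n]] \<open>x \<in> _\<close> \<open>y \<in> _\<close>
        by (metis (no_types, lifting) SigmaI imageE)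
      ultimately show "(x, y) \<in> ?f ` {w \<in> words 4 n. P (high_bits w) \<and> Q (low_bits w)}"
        by auto
    qed
  qed
  then have "bij_betw ?f {w \<in> words 4 n. P (high_bits w) \<and> Q (low_bits w)}
      ({x \<in> words 2 n. P x} \<times> {y \<in> words 2 n. Q y})"
    by (intro bij_betw_subset[OF bij_betw_bits]) auto
  then show ?thesis
    by (simp add: bij_betw_same_card card_cartesian_product)
qed

lemma balanced_word_4_iff:
  assumes "x \<in> words 4 n"
  shows "balanced_word 4 x \<longleftrightarrow> 2 * count_list (high_bits x) 1 = n"
proof -
  have "filter (\<lambda>c. c \<in> {2, 3}) x = filter (\<lambda>c. c div 2 = 1) x"
    using assms by (intro filter_cong) (auto simp: words_def)
  then show ?thesis
    using assms by (simp add: balanced_word_def heavy_def count_list_conv_length_filter filter_map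
        comp_def words_def)
qed

lemma card_balanced_words_2:
  assumes "even n"
  shows "card {x \<in> words 2 n. balanced_word 2 x} = n choose (n div 2)"
proof -
  have "{x \<in> words 2 n. balanced_word 2 x} = {x \<in> words 2 n. count_list x 1 = n div 2}"
    using assms by (auto simp: balanced_word_2_iff words_def)
  then show ?thesis
    using card_words_count[of n "n div 2"] by simp
qed

lemma card_balanced_words_4:
  assumes "even n"
  shows "card {x \<in> words 4 n. balanced_word 4 x} = (n choose (n div 2)) * 2 ^ n"
proof -
  have "{x \<in> words 4 n. balanced_word 4 x}
      = {w \<in> words 4 n. count_list (high_bits w) 1 = n div 2 \<and> True}"
    using assms balanced_word_4_iff by auto
  then show ?thesis
    using card_words_4_bits[of n "\<lambda>x. count_list x 1 = n div 2" "\<lambda>_. True"]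
      card_words_count[of n "n div 2"] by (simp add: card_words)
qed

lemma finite_codes: "finite {C. C \<subseteq> words q n \<and> P C}"
  using finite_words by (simp add: finite_subset[of _ "Pow (words q n)"] subset_eq)

lemma card_le_A_BAL_WMU:
  assumes "C \<subseteq> words q n" "\<forall>x\<in>C. balanced_word q x" "wmu \<kappa> n C"
  shows "card C \<le> A_BAL_WMU q \<kappa> n"
  unfolding A_BAL_WMU_def using assms by (intro Max_ge finite_imageI finite_codes) auto

lemma A_BAL_WMU_le:
  assumes "\<And>C. C \<subseteq> words q n \<Longrightarrow> \<forall>x\<in>C. balanced_word q x \<Longrightarrow> wmu \<kappa> n C \<Longrightarrow> card C \<le> B"
  shows "A_BAL_WMU q \<kappa> n \<le> B"
proof -
  have "{} \<in> {C. C \<subseteq> words q n \<and> (\<forall>x\<in>C. balanced_word q x) \<and> wmu \<kappa> n C}"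
    by (simp add: wmu_def)
  then show ?thesis
    unfolding A_BAL_WMU_def using assms by (intro Max.boundedI finite_imageI finite_codes) auto
qed

lemma A_BAL_MU_eq: "A_BAL_MU q n = A_BAL_WMU q 1 n"
  by (simp add: A_BAL_MU_def A_BAL_WMU_def mu_def)

lemma wmu_mono: "\<kappa> \<le> \<kappa>' \<Longrightarrow> wmu \<kappa> n C \<Longrightarrow> wmu \<kappa>' n C"
  unfolding wmu_def by auto

lemma wmu_map_preimage: "wmu \<kappa> n C \<Longrightarrow> wmu \<kappa> n {w \<in> X. map f w \<in> C}"
  unfolding wmu_def by (metis (mono_tags, lifting) drop_map mem_Collect_eq take_map)

section \<open>Upper bound by counting rotations\<close>

lemma mod_sum_eq_cases:
  fixes i j a b n :: nat
  assumes "i < n" "j < n" "a < n" "b < n" "(i + a) mod n = (j + b) mod n"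
  shows "i + a = j + b \<or> i + a = j + b + n \<or> j + b = i + a + n"
proof -
  have mod_less_double: "x mod n = (if x < n then x else x - n)" if "x < 2 * n" for x :: nat
    using that le_mod_geq[of n x] by (simp add: mod_if)
  have "i + a < 2 * n" "j + b < 2 * n"
    using assms by linarith+
  then show ?thesis
    using assms(5) by (simp add: mod_less_double split: if_splits)
qed

lemma card_cyclically_separated:
  assumes I: "I \<subseteq> {..<n}" and tn: "t \<le> n"
    and sep: "\<And>i j. i \<in> I \<Longrightarrow> j \<in> I \<Longrightarrow> i < j \<Longrightarrow> t \<le> j - i \<and> t \<le> n - (j - i)"
  shows "card I * t \<le> n"
proof -
  define arc where "arc i = (\<lambda>a. (i + a) mod n) ` {..<t}" for i
  have card_arc: "card (arc i) = t" if "i \<in> I" for i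
  proof -
    have "inj_on (\<lambda>a. (i + a) mod n) {..<t}"
    proof (rule inj_onI)
      fix a b assume "a \<in> {..<t}" "b \<in> {..<t}" "(i + a) mod n = (i + b) mod n"
      then show "a = b"
        using that I tn mod_sum_eq_cases[of i n i a b] by auto
    qed
    then show ?thesis
      by (simp add: arc_def card_image)
  qed
  have arcs_disjoint: "arc i \<inter> arc j = {}" if "i \<in> I" "j \<in> I" "i < j" for i j
  proof -
    have "j < n"
      using I \<open>j \<in> I\<close> by auto
    then have "(i + a) mod n \<noteq> (j + b) mod n" if "a < t" "b < t" for a b
      using \<open>i < j\<close> that tn sep[OF \<open>i \<in> I\<close> \<open>j \<in> I\<close> \<open>i < j\<close>]
        mod_sum_eq_cases[of i n j a b] by linarith
    then show ?thesis
      by (auto simp: arc_def)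
  qed
  have "card I * t = card (\<Union>i\<in>I. arc i)"
  proof -
    have "card (\<Union>i\<in>I. arc i) = (\<Sum>i\<in>I. card (arc i))"
    proof (rule card_UN_disjoint)
      show "finite I"
        using I finite_subset by blast
      show "\<forall>i\<in>I. \<forall>j\<in>I. i \<noteq> j \<longrightarrow> arc i \<inter> arc j = {}"
        using arcs_disjoint by (metis inf_commute linorder_neqE_nat)
    qed (simp add: arc_def)
    then show ?thesis
      using card_arc by simp
  qed
  also have "\<dots> \<le> card {..<n}"
    using tn by (intro card_mono) (auto simp: arc_def)
  finally show ?thesis
    by simp
qed

lemma wmu_rotate_notin:
  assumes "wmu \<kappa> n C" "a \<in> C" "length a = n" "0 < \<kappa>" "0 < d" "d \<le> n - \<kappa>"
  shows "rotate d a \<notin> C"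
proof
  assume "rotate d a \<in> C"
  moreover have "take (n - d) (rotate d a) = drop (n - (n - d)) a"
    using assms(3-6) by (simp add: rotate_drop_take)
  moreover have "\<kappa> \<le> n - d" "n - d < n"
    using assms(4-6) by linarith+
  ultimately show False
    using assms(1,2) unfolding wmu_def by blast
qed

lemma card_rotations_in_code:
  assumes "wmu \<kappa> n C" "length w = n" "0 < \<kappa>" "\<kappa> < n"
  shows "card {i \<in> {..<n}. rotate i w \<in> C} * (n - \<kappa> + 1) \<le> n"
proof (rule card_cyclically_separated)
  fix i j assume i: "i \<in> {i \<in> {..<n}. rotate i w \<in> C}" and j: "j \<in> {i \<in> {..<n}. rotate i w \<in> C}"
    and "i < j"
  have "rotate (j - i) (rotate i w) = rotate j w"
    using \<open>i < j\<close> by (simp add: rotate_rotate)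
  then have "\<not> j - i \<le> n - \<kappa>"
    using wmu_rotate_notin[OF assms(1), of "rotate i w" "j - i"] i j \<open>i < j\<close> assms(2,3) by auto
  moreover have "rotate (n - (j - i)) (rotate j w) = rotate i w"
  proof -
    have "n - (j - i) + j = n + i"
      using \<open>i < j\<close> j by auto
    then have "rotate (n - (j - i)) (rotate j w) = rotate n (rotate i w)"
      by (simp add: rotate_rotate)
    then show ?thesis
      using assms(2) by (simp add: rotate_id)
  qed
  then have "\<not> n - (j - i) \<le> n - \<kappa>"
    using wmu_rotate_notin[OF assms(1), of "rotate j w" "n - (j - i)"] i j \<open>i < j\<close> assms(2,3) by auto
  ultimately show "n - \<kappa> + 1 \<le> j - i \<and> n - \<kappa> + 1 \<le> n - (j - i)"
    by linarith
qed (use assms in auto)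

lemma card_rotation_preimage:
  assumes len: "\<And>w. w \<in> W \<Longrightarrow> length w = n" and rot: "\<And>w i. w \<in> W \<Longrightarrow> rotate i w \<in> W"
    and "C \<subseteq> W"
  shows "card {w \<in> W. rotate i w \<in> C} = card C"
proof -
  have "inj (rotate i :: 'a list \<Rightarrow> 'a list)"
    by (simp add: rotate_def inj_rotate1)
  moreover have "rotate i ` {w \<in> W. rotate i w \<in> C} = C"
  proof (intro subset_antisym subsetI)
    fix c assume "c \<in> C"
    then have c: "c \<in> W" "length c = n"
      using assms by auto
    \<comment> \<open>\<open>i + (n i - i)\<close> is a multiple of the length \<open>n\<close>\<close>
    define d where "d = rotate (n * i - i) c"
    have "rotate i d = c"
    proof (cases "n = 0")
      case False
      then have "i + (n * i - i) = n * i"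
        by simp
      then show ?thesis
        using c(2) by (simp add: d_def rotate_rotate)
    qed (use c(2) in \<open>simp add: d_def\<close>)
    moreover have "d \<in> W"
      using c by (simp add: d_def rot)
    ultimately show "c \<in> rotate i ` {w \<in> W. rotate i w \<in> C}"
      using \<open>c \<in> C\<close> by force
  qed blast
  ultimately show ?thesis
    by (metis card_image inj_on_subset subset_UNIV)
qed

lemma card_wmu_code_le:
  assumes fin: "finite W" and len: "\<And>w. w \<in> W \<Longrightarrow> length w = n"
    and rot: "\<And>w i. w \<in> W \<Longrightarrow> rotate i w \<in> W"
    and "C \<subseteq> W" "wmu \<kappa> n C" "0 < \<kappa>" "\<kappa> < n"
  shows "card C * (n - \<kappa> + 1) \<le> card W"
proof -
  define t where "t = n - \<kappa> + 1"
  have "n * card C = (\<Sum>i<n. card {w \<in> W. rotate i w \<in> C})"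
    using card_rotation_preimage[OF len rot \<open>C \<subseteq> W\<close>] by simp
  also have "\<dots> = (\<Sum>w\<in>W. card {i \<in> {..<n}. rotate i w \<in> C})"
    using sum.swap_restrict[OF fin finite_lessThan, where g = "\<lambda>_ _. 1::nat" and R = "\<lambda>w i. rotate i w \<in> C"]
    by simp
  finally have "n * card C * t = (\<Sum>w\<in>W. card {i \<in> {..<n}. rotate i w \<in> C} * t)"
    by (simp add: sum_distrib_right)
  also have "\<dots> \<le> (\<Sum>w\<in>W. n)"
    using card_rotations_in_code[OF \<open>wmu \<kappa> n C\<close> len \<open>0 < \<kappa>\<close> \<open>\<kappa> < n\<close>] unfolding t_def by (intro sum_mono) auto
  finally have "n * (card C * t) \<le> n * card W"
    by (simp add: mult.commute mult.left_commute)
  then show ?thesis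
    using \<open>\<kappa> < n\<close> by (simp add: t_def)
qed

lemma A_BAL_WMU_upper:
  assumes "0 < \<kappa>" "\<kappa> < n"
  shows "A_BAL_WMU q \<kappa> n * (n - \<kappa> + 1) \<le> card {x \<in> words q n. balanced_word q x}"
proof -
  have "A_BAL_WMU q \<kappa> n \<le> card {x \<in> words q n. balanced_word q x} div (n - \<kappa> + 1)"
  proof (rule A_BAL_WMU_le)
    fix C assume "C \<subseteq> words q n" "\<forall>x\<in>C. balanced_word q x" "wmu \<kappa> n C"
    moreover have "finite {x \<in> words q n. balanced_word q x}"
      by (simp add: finite_words)
    ultimately have "card C * (n - \<kappa> + 1) \<le> card {x \<in> words q n. balanced_word q x}"
      using assms by (intro card_wmu_code_le) (auto simp: words_def)
    then show "card C \<le> card {x \<in> words q n. balanced_word q x} div (n - \<kappa> + 1)"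
      by (simp add: less_eq_div_iff_mult_less_eq)
  qed
  then show ?thesis
    by (simp add: less_eq_div_iff_mult_less_eq)
qed

lemma A_BAL_WMU_4_upper:
  assumes "even n" "0 < \<kappa>" "\<kappa> < n"
  shows "A_BAL_WMU 4 \<kappa> n * (n - \<kappa> + 1) \<le> (n choose (n div 2)) * 2 ^ n"
  using A_BAL_WMU_upper[OF assms(2,3), where q = 4] card_balanced_words_4[OF assms(1)] by simp

lemma A_BAL_WMU_2_upper:
  assumes "even n" "0 < \<kappa>" "\<kappa> < n"
  shows "A_BAL_WMU 2 \<kappa> n * (n - \<kappa> + 1) \<le> n choose (n div 2)"
  using A_BAL_WMU_upper[OF assms(2,3), where q = 2] card_balanced_words_2[OF assms(1)] by simp

lemma A_BAL_MU_2_upper: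
  assumes "even n" "2 \<le> n"
  shows "A_BAL_MU 2 n * n \<le> n choose (n div 2)"
  using A_BAL_WMU_2_upper[OF assms(1), of 1] assms(2) by (simp add: A_BAL_MU_eq)

section \<open>Dyck words and the cycle lemma\<close>

lemma ex_last_argmin:
  fixes f :: "nat \<Rightarrow> 'b::linorder"
  assumes "0 < L"
  obtains i where "i < L" "\<And>j. j < L \<Longrightarrow> f i \<le> f j" "\<And>j. i < j \<Longrightarrow> j < L \<Longrightarrow> f i < f j"
proof -
  define argmins where "argmins = {j. j < L \<and> f j = Min (f ` {..<L})}"
  have "Min (f ` {..<L}) \<in> f ` {..<L}"
    using assms by (intro Min_in) auto
  then have "argmins \<noteq> {}" "finite argmins"
    by (auto simp: argmins_def)
  then have "Max argmins \<in> argmins" "\<And>j. j \<in> argmins \<Longrightarrow> j \<le> Max argmins"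
    by auto
  moreover have "Min (f ` {..<L}) \<le> f j" if "j < L" for j
    using that by simp
  ultimately show ?thesis
    by (intro that[of "Max argmins"]) (fastforce simp: argmins_def order.order_iff_strict)+
qed

lemma cycle_lemma:
  assumes "2 * count_list w a + 1 = length w"
  obtains i where "i < length w"
    "\<And>j. 0 < j \<Longrightarrow> j < length w \<Longrightarrow> 2 * count_list (take j (rotate i w)) a < j"
proof -
  define L where "L = length w"
  define excess where "excess j = int j - 2 * int (count_list (take j w) a)" for j
  have "0 < L"
    using assms by (simp add: L_def flip: assms)
  \<comment> \<open>start the rotation right after the last minimum of the prefix excess\<close>
  then obtain i where "i < L" and min: "\<And>j. j < L \<Longrightarrow> excess i \<le> excess j"
    and last: "\<And>j. i < j \<Longrightarrow> j < L \<Longrightarrow> excess i < excess j"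
    using ex_last_argmin[of L excess] by blast
  have "excess 0 = 0" "excess L = 1"
    using assms by (simp_all add: excess_def L_def)
  then have "excess i \<le> 0"
    using min[of 0] \<open>0 < L\<close> by simp
  have rot: "rotate i w = drop i w @ take i w"
    using \<open>i < L\<close> by (simp add: L_def rotate_drop_take)
  have "2 * count_list (take j (rotate i w)) a < j" if "0 < j" "j < L" for j
  proof (cases "i + j \<le> L")
    case True
    then have "take (i + j) w = take i w @ take j (drop i w)"
      by (simp add: take_add)
    then have "int j - 2 * int (count_list (take j (rotate i w)) a) = excess (i + j) - excess i"
      using True rot by (simp add: excess_def L_def)
    moreover have "excess i < excess (i + j)"
      using last[of "i + j"] that True \<open>excess L = 1\<close> \<open>excess i \<le> 0\<close>
      by (cases "i + j = L") auto
    ultimately show ?thesis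
      by linarith
  next
    case False
    define s where "s = i + j - L"
    have "s < i" "j = (L - i) + s"
      using False that \<open>i < L\<close> by (auto simp: s_def)
    then have "take j (rotate i w) = drop i w @ take s w"
      using rot by (simp add: L_def)
    moreover have "count_list w a = count_list (take i w) a + count_list (drop i w) a"
      by (metis append_take_drop_id count_list_append)
    ultimately have "int j - 2 * int (count_list (take j (rotate i w)) a) = excess s + excess L - excess i"
      using \<open>j = (L - i) + s\<close> \<open>i < L\<close> by (simp add: excess_def L_def)
    moreover have "excess i \<le> excess s"
      using min \<open>s < i\<close> \<open>i < L\<close> by simp
    ultimately show ?thesis
      using \<open>excess L = 1\<close> by linarith
  qed
  then show ?thesis
    using that \<open>i < L\<close> by (simp add: L_def)
qed

definition dyck_words :: "nat \<Rightarrow> nat list set" where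
  "dyck_words n = {x \<in> words 2 n. balanced_word 2 x \<and>
     (\<forall>j. 0 < j \<longrightarrow> j < n \<longrightarrow> 2 * count_list (take j x) 1 < j)}"

lemma mu_dyck_words: "mu n (dyck_words n)"
  unfolding mu_def wmu_def
proof (intro ballI allI impI)
  fix a b l assume a: "a \<in> dyck_words n" and b: "b \<in> dyck_words n" and "1 \<le> l" "l < n"
  have "count_list b 1 = count_list (take (n - l) b) 1 + count_list (drop (n - l) b) 1"
    by (metis append_take_drop_id count_list_append)
  moreover have "2 * count_list b 1 = n" "2 * count_list (take (n - l) b) 1 < n - l"
    using b \<open>1 \<le> l\<close> \<open>l < n\<close> by (auto simp: dyck_words_def balanced_word_2_iff words_def)
  moreover have "2 * count_list (take l a) 1 < l"
    using a \<open>1 \<le> l\<close> \<open>l < n\<close> by (auto simp: dyck_words_def)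
  ultimately show "take l a \<noteq> drop (n - l) b"
    by auto
qed

lemma snoc_one_in_dyck_words:
  assumes "x \<in> words 2 L" "2 * count_list x 1 + 1 = L"
    and "\<And>j. 0 < j \<Longrightarrow> j < L \<Longrightarrow> 2 * count_list (take j x) 1 < j"
  shows "x @ [1] \<in> dyck_words (L + 1)"
proof -
  have "2 * count_list (take j (x @ [1])) 1 < j" if "0 < j" "j < L + 1" for j
  proof (cases "j < L")
    case False
    then have "take j (x @ [1]) = x"
      using that assms(1) by (simp add: words_def)
    then show ?thesis
      using assms(2) False that by simp
  qed (use assms that in \<open>simp add: words_def\<close>)
  then show ?thesis
    using assms by (auto simp: dyck_words_def words_def balanced_word_2_iff)
qed

lemma card_dyck_words_lower:
  assumes "even n" "0 < n"
  shows "(n - 1) choose (n div 2 - 1) \<le> (n - 1) * card (dyck_words n)"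
proof -
  define L where "L = n - 1"
  define T where "T = {w \<in> words 2 L. count_list w 1 = n div 2 - 1}"
  have "T \<subseteq> (\<Union>j<L. (\<lambda>d. rotate j (butlast d)) ` dyck_words n)"
  proof
    fix w assume "w \<in> T"
    then have w: "w \<in> words 2 L" "2 * count_list w 1 + 1 = length w" and "length w = L"
      using assms by (auto simp: T_def L_def words_def)
    obtain i where "i < length w"
      and i: "\<And>j. 0 < j \<Longrightarrow> j < length w \<Longrightarrow> 2 * count_list (take j (rotate i w)) 1 < j"
      using cycle_lemma[OF w(2)] by blast
    note i = i[unfolded \<open>length w = L\<close>] and \<open>i < length w\<close>[unfolded \<open>length w = L\<close>]
    have "rotate i w @ [1] \<in> dyck_words n"
      using snoc_one_in_dyck_words[of "rotate i w" L] w i assms by (simp add: L_def words_def)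
    moreover have "rotate ((L - i) mod L) (rotate i w) = w"
    proof -
      have "((L - i) mod L + i) mod length w = 0"
        using \<open>i < L\<close> \<open>length w = L\<close> by (simp add: mod_add_left_eq)
      then show ?thesis
        by (simp add: rotate_rotate)
    qed
    ultimately show "w \<in> (\<Union>j<L. (\<lambda>d. rotate j (butlast d)) ` dyck_words n)"
      using \<open>i < L\<close> by (intro UN_I[of "(L - i) mod L"]) (auto intro: rev_image_eqI)
  qed
  moreover have "finite (dyck_words n)"
    by (simp add: dyck_words_def finite_words)
  ultimately have "card T \<le> card (\<Union>j<L. (\<lambda>d. rotate j (butlast d)) ` dyck_words n)"
    by (intro card_mono) auto
  also have "\<dots> \<le> (\<Sum>j<L. card ((\<lambda>d. rotate j (butlast d)) ` dyck_words n))"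
    by (rule card_UN_le) simp
  also have "\<dots> \<le> (\<Sum>j<L. card (dyck_words n))"
    by (intro sum_mono card_image_le \<open>finite (dyck_words n)\<close>)
  finally show ?thesis
    using card_words_count[of L "n div 2 - 1"] by (simp add: T_def L_def)
qed

lemma central_binomial_eq: "0 < m \<Longrightarrow> (2 * m) choose m = 2 * ((2 * m - 1) choose (m - 1))"
  using binomial_absorption[of "m - 1" "2 * m"] by simp

lemma central_binomial_le_card_dyck_words:
  assumes "even n" "0 < n"
  shows "n choose (n div 2) \<le> 2 * (n - 1) * card (dyck_words n)"
  using central_binomial_eq[of "n div 2"] card_dyck_words_lower[OF assms] assms by auto

lemma central_binomial_le_A_BAL_MU:
  assumes "even n" "0 < n"
  shows "n choose (n div 2) \<le> 2 * (n - 1) * A_BAL_MU 2 n"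
proof -
  have "card (dyck_words n) \<le> A_BAL_MU 2 n"
    using mu_dyck_words[of n] unfolding A_BAL_MU_eq mu_def
    by (intro card_le_A_BAL_WMU) (auto simp: dyck_words_def)
  then show ?thesis
    using central_binomial_le_card_dyck_words[OF assms] by (meson le_trans mult_le_mono2)
qed

section \<open>Marker codes\<close>

lemma card_words_with_prefix:
  assumes "set p \<subseteq> {0..<2}" "length p \<le> n"
  shows "card {s \<in> words 2 n. take (length p) s = p} = 2 ^ (n - length p)"
proof -
  have "bij_betw (\<lambda>x. p @ x) (words 2 (n - length p)) {s \<in> words 2 n. take (length p) s = p}"
  proof (rule bij_betwI[where g = "drop (length p)"])
    show "(@) p \<in> words 2 (n - length p) \<rightarrow> {s \<in> words 2 n. take (length p) s = p}"
      using assms by (auto simp: words_def)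
    show "drop (length p) \<in> {s \<in> words 2 n. take (length p) s = p} \<rightarrow> words 2 (n - length p)"
      by (auto simp: words_def dest: in_set_dropD)
    show "p @ drop (length p) s = s" if "s \<in> {s \<in> words 2 n. take (length p) s = p}" for s
      using that by (metis (mono_tags, lifting) append_take_drop_id mem_Collect_eq)
  qed simp
  then show ?thesis
    by (simp add: bij_betw_same_card[symmetric] card_words)
qed

lemma card_words_with_prefix_repeated:
  assumes "set p \<subseteq> {0..<2}" "length p \<le> d" "d + length p \<le> n"
  shows "card {s \<in> words 2 n. take (length p) s = p \<and> take (length p) (drop d s) = p}
           \<le> 2 ^ (n - 2 * length p)"
proof -
  let ?P = "length p"
  let ?insert = "\<lambda>(u, v). p @ u @ p @ v"
  have "{s \<in> words 2 n. take ?P s = p \<and> take ?P (drop d s) = p}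
      \<subseteq> ?insert ` (words 2 (d - ?P) \<times> words 2 (n - d - ?P))"
  proof
    fix s assume s: "s \<in> {s \<in> words 2 n. take ?P s = p \<and> take ?P (drop d s) = p}"
    define u where "u = drop ?P (take d s)"
    define v where "v = drop ?P (drop d s)"
    have "take ?P (take d s) = p"
      using s assms(2) by (simp add: min_def)
    then have "take d s = p @ u"
      unfolding u_def by (metis append_take_drop_id)
    moreover have "drop d s = p @ v"
      using s unfolding v_def by (metis (mono_tags, lifting) append_take_drop_id mem_Collect_eq)
    ultimately have "s = ?insert (u, v)"
      by (metis append_take_drop_id append.assoc case_prod_conv)
    moreover have "length s = n" "set s \<subseteq> {0..<2}"
      using s by (auto simp: words_def)
    then have "u \<in> words 2 (d - ?P)" "v \<in> words 2 (n - d - ?P)"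
      using assms unfolding u_def v_def words_def by (auto dest: in_set_dropD in_set_takeD)
    ultimately show "s \<in> ?insert ` (words 2 (d - ?P) \<times> words 2 (n - d - ?P))"
      by blast
  qed
  then have "card {s \<in> words 2 n. take ?P s = p \<and> take ?P (drop d s) = p}
      \<le> card (?insert ` (words 2 (d - ?P) \<times> words 2 (n - d - ?P)))"
    by (intro card_mono) (simp_all add: finite_words)
  also have "\<dots> \<le> card (words 2 (d - ?P) \<times> words 2 (n - d - ?P))"
    by (intro card_image_le) (simp add: finite_words)
  also have "\<dots> = 2 ^ (d - ?P + (n - d - ?P))"
    by (simp add: card_cartesian_product card_words power_add)
  also have "d - ?P + (n - d - ?P) = n - 2 * ?P"
    using assms by simp
  finally show ?thesis .
qed

text \<open>A shift of the marker \<open>1\<^sup>k 0\<close> by \<open>1, \<dots>, k\<close> positions puts a 1 where the marker has its 0.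
  Hence if all codewords start with the marker and do not repeat it at the shifts
  \<open>k + 1, \<dots>, t - 1\<close>, no codeword prefix of length \<open>> n - t\<close> is a codeword suffix.\<close>

definition marker_code :: "nat \<Rightarrow> nat \<Rightarrow> nat \<Rightarrow> nat list set" where
  "marker_code k t n = {s \<in> words 2 n. take (k + 1) s = replicate k 1 @ [0] \<and>
     (\<forall>d \<in> {k + 1..<t}. take (k + 1) (drop d s) \<noteq> replicate k 1 @ [0])}"

lemma wmu_marker_code:
  assumes "k < \<kappa>"
  shows "wmu \<kappa> n (marker_code k (n - \<kappa> + 1) n)"
  unfolding wmu_def
proof (intro ballI allI impI notI)
  fix a b l
  assume a: "a \<in> marker_code k (n - \<kappa> + 1) n" and b: "b \<in> marker_code k (n - \<kappa> + 1) n"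
    and "\<kappa> \<le> l" "l < n" and overlap: "take l a = drop (n - l) b"
  define marker :: "nat list" where "marker = replicate k 1 @ [0]"
  define d where "d = n - l"
  have "take (k + 1) (take l a) = marker"
    using a \<open>\<kappa> \<le> l\<close> assms by (simp add: marker_code_def marker_def min_def)
  then have shifted: "take (k + 1) (drop d b) = marker"
    using overlap by (simp add: d_def)
  show False
  proof (cases "k + 1 \<le> d")
    case True
    then show False
      using b shifted \<open>\<kappa> \<le> l\<close> by (auto simp: marker_code_def marker_def d_def)
  next
    case False
    then have "d \<le> k"
      by simp
    have "length b = n" "take (k + 1) b = marker"
      using b by (auto simp: marker_code_def marker_def words_def)
    have "b ! k = take (k + 1) b ! k"
      by simp
    also have "\<dots> = 0"
      using \<open>take (k + 1) b = marker\<close> by (simp add: marker_def nth_append)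
    finally have bk: "b ! k = 0" .
    have "marker ! (k - d) = drop d b ! (k - d)"
      using shifted \<open>d \<le> k\<close> by (metis le_imp_less_Suc Suc_eq_plus1 diff_le_self nth_take)
    also have "\<dots> = b ! k"
      using \<open>d \<le> k\<close> \<open>l < n\<close> \<open>length b = n\<close> by (simp add: nth_drop d_def)
    finally have "marker ! (k - d) = b ! k" .
    moreover have "marker ! (k - d) = 1"
      using False \<open>l < n\<close> by (simp add: marker_def nth_append d_def)
    ultimately show False
      using bk by simp
  qed
qed

lemma card_marker_code:
  assumes "k + 2 \<le> n" "t + k \<le> n" "t \<le> 2 ^ k"
  shows "2 ^ n \<le> card (marker_code k t n) * 2 ^ (k + 2)"
proof -
  define marker :: "nat list" where "marker = replicate k 1 @ [0]"
  define repeats where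
    "repeats d = {s \<in> words 2 n. take (k + 1) s = marker \<and> take (k + 1) (drop d s) = marker}" for d
  have marker: "set marker \<subseteq> {0..<2}" "length marker = k + 1"
    by (auto simp: marker_def)
  have "marker_code k t n = {s \<in> words 2 n. take (k + 1) s = marker} - (\<Union>d\<in>{k + 1..<t}. repeats d)"
    by (auto simp: marker_code_def repeats_def marker_def)
  moreover have "finite (\<Union>d\<in>{k + 1..<t}. repeats d)"
    by (simp add: repeats_def finite_words)
  ultimately have "card {s \<in> words 2 n. take (k + 1) s = marker} - card (\<Union>d\<in>{k + 1..<t}. repeats d)
      \<le> card (marker_code k t n)"
    by (simp add: diff_card_le_card_Diff)
  moreover have "card {s \<in> words 2 n. take (k + 1) s = marker} = 2 * 2 ^ (n - k - 2)"
    using card_words_with_prefix[OF marker(1)] marker(2) assms(1)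
    by (simp flip: power_Suc)
  moreover have "card (\<Union>d\<in>{k + 1..<t}. repeats d) \<le> 2 ^ (n - k - 2)"
  proof (cases "k + 1 < t")
    case True
    have "card (\<Union>d\<in>{k + 1..<t}. repeats d) \<le> (\<Sum>d\<in>{k + 1..<t}. card (repeats d))"
      by (rule card_UN_le) simp
    also have "\<dots> \<le> (\<Sum>d\<in>{k + 1..<t}. 2 ^ (n - 2 * (k + 1)))"
      using card_words_with_prefix_repeated[OF marker(1)] marker(2) assms(2)
      by (intro sum_mono) (auto simp: repeats_def)
    also have "\<dots> \<le> 2 ^ k * 2 ^ (n - 2 * (k + 1))"
      using assms(3) by simp
    also have "\<dots> = 2 ^ (n - k - 2)"
      using True assms(2) by (simp flip: power_add)
    finally show ?thesis .
  qed simp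
  ultimately have "2 ^ (n - k - 2) \<le> card (marker_code k t n)"
    by linarith
  have "(2::nat) ^ n = 2 ^ (n - k - 2) * 2 ^ (k + 2)"
    using assms(1) by (metis le_add_diff_inverse2 diff_diff_left power_add)
  also have "\<dots> \<le> card (marker_code k t n) * 2 ^ (k + 2)"
    using \<open>2 ^ (n - k - 2) \<le> card (marker_code k t n)\<close> by (rule mult_le_mono1)
  finally show ?thesis .
qed

section \<open>Balanced DNA codes\<close>

lemma card_mult_le_A_BAL_WMU_4:
  assumes "H \<subseteq> {x \<in> words 2 n. balanced_word 2 x}" "S \<subseteq> words 2 n" "wmu \<kappa> n H \<or> wmu \<kappa> n S"
  shows "card H * card S \<le> A_BAL_WMU 4 \<kappa> n"
proof -
  define C where "C = {w \<in> words 4 n. high_bits w \<in> H \<and> low_bits w \<in> S}"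
  have "{x \<in> words 2 n. x \<in> H} = H" "{y \<in> words 2 n. y \<in> S} = S"
    using assms(1,2) by auto
  then have "card C = card H * card S"
    using card_words_4_bits[of n "\<lambda>x. x \<in> H" "\<lambda>y. y \<in> S"] by (simp add: C_def)
  moreover have "\<forall>w\<in>C. balanced_word 4 w"
  proof
    fix w assume "w \<in> C"
    then have "w \<in> words 4 n" "balanced_word 2 (high_bits w)"
      using assms(1) by (auto simp: C_def)
    then show "balanced_word 4 w"
      by (simp add: balanced_word_4_iff balanced_word_2_iff words_def)
  qed
  moreover from assms(3) have "wmu \<kappa> n C"
  proof
    assume "wmu \<kappa> n H"
    then have "wmu \<kappa> n {w \<in> {w \<in> words 4 n. low_bits w \<in> S}. high_bits w \<in> H}"
      by (rule wmu_map_preimage)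
    moreover have "C = {w \<in> {w \<in> words 4 n. low_bits w \<in> S}. high_bits w \<in> H}"
      by (auto simp: C_def)
    ultimately show ?thesis
      by simp
  next
    assume "wmu \<kappa> n S"
    then have "wmu \<kappa> n {w \<in> {w \<in> words 4 n. high_bits w \<in> H}. low_bits w \<in> S}"
      by (rule wmu_map_preimage)
    moreover have "C = {w \<in> {w \<in> words 4 n. high_bits w \<in> H}. low_bits w \<in> S}"
      by (auto simp: C_def)
    ultimately show ?thesis
      by simp
  qed
  ultimately show ?thesis
    using card_le_A_BAL_WMU[of C 4 n] by (simp add: C_def)
qed

lemma ex_power_of_two_bracket:
  fixes t :: nat
  assumes "2 \<le> t"
  obtains k :: nat where "0 < k" "2 ^ (k - 1) < t" "t \<le> 2 ^ k"
proof -
  define k where "k = (LEAST k. t \<le> 2 ^ k)"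
  have "t \<le> 2 ^ k"
    unfolding k_def by (rule LeastI[of _ t]) (simp add: less_imp_le)
  moreover from this have "0 < k"
    using assms by (auto intro: gr0I)
  moreover from this have "\<not> t \<le> 2 ^ (k - 1)"
    unfolding k_def by (intro not_less_Least) (simp add: k_def)
  ultimately show ?thesis
    using that by simp
qed

lemma A_BAL_WMU_4_lower:
  assumes "even n" "0 < \<kappa>" "\<kappa> < n"
  shows "3 * ((n choose (n div 2)) * 2 ^ n) \<le> 64 * (n - \<kappa> + 1) * A_BAL_WMU 4 \<kappa> n"
proof -
  define t where "t = n - \<kappa> + 1"
  define B where "B = n choose (n div 2)"
  have "2 \<le> t"
    using assms(3) by (simp add: t_def)
  then obtain k where "0 < k" "2 ^ (k - 1) < t" "t \<le> 2 ^ k"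
    by (rule ex_power_of_two_bracket)
  show ?thesis
  proof (cases "k < \<kappa>")
    case True
    \<comment> \<open>balanced G/C pattern, marker code in the second bit\<close>
    have "marker_code k t n \<subseteq> words 2 n"
      by (auto simp: marker_code_def)
    from card_mult_le_A_BAL_WMU_4[OF order_refl this] wmu_marker_code[OF True, of n]
    have code: "B * card (marker_code k t n) \<le> A_BAL_WMU 4 \<kappa> n"
      using card_balanced_words_2[OF assms(1)] by (simp add: B_def t_def)
    have "2 ^ n \<le> card (marker_code k t n) * 2 ^ (k + 2)"
      using True assms \<open>t \<le> 2 ^ k\<close> by (intro card_marker_code) (auto simp: t_def)
    also have "\<dots> \<le> card (marker_code k t n) * (8 * t)"
      using \<open>2 ^ (k - 1) < t\<close> \<open>0 < k\<close> by (simp add: power_add power_eq_if)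
    finally have "B * 2 ^ n \<le> 8 * t * (B * card (marker_code k t n))"
      by (simp add: algebra_simps)
    also have "\<dots> \<le> 8 * (t * A_BAL_WMU 4 \<kappa> n)"
      using code by simp
    finally show ?thesis
      unfolding B_def[symmetric] t_def[symmetric] mult.assoc by linarith
  next
    case False
    \<comment> \<open>\<open>\<kappa> \<le> k < t\<close> forces \<open>n < 2 t\<close>: Dyck G/C pattern, arbitrary second bit\<close>
    have "k \<le> 2 ^ (k - 1)"
      using \<open>0 < k\<close> by (metis Suc_diff_1 Suc_le_eq less_exp)
    then have "n - 1 \<le> 2 * t"
      using False \<open>2 ^ (k - 1) < t\<close> by (simp add: t_def)
    have "B \<le> 2 * (n - 1) * card (dyck_words n)"
      using central_binomial_le_card_dyck_words[OF assms(1)] assms(3) by (simp add: B_def)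
    then have "3 * (B * 2 ^ n) \<le> 3 * (2 * (n - 1) * card (dyck_words n) * 2 ^ n)"
      by (simp only: mult_le_mono1 mult_le_mono2)
    also have "\<dots> = 6 * (n - 1) * (card (dyck_words n) * 2 ^ n)"
      by simp
    also have "\<dots> \<le> 12 * t * (card (dyck_words n) * 2 ^ n)"
      using \<open>n - 1 \<le> 2 * t\<close> by simp
    also have "card (dyck_words n) * 2 ^ n \<le> A_BAL_WMU 4 \<kappa> n"
      using card_mult_le_A_BAL_WMU_4[of "dyck_words n" n "words 2 n" \<kappa>] mu_dyck_words[of n]
        wmu_mono[of 1 \<kappa>] assms(2) by (auto simp: dyck_words_def card_words mu_def)
    also have "12 * t * A_BAL_WMU 4 \<kappa> n \<le> 64 * t * A_BAL_WMU 4 \<kappa> n"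
      by simp
    finally show ?thesis
      by (simp add: B_def t_def)
  qed
qed

theorem theorem6:
  fixes n \<kappa> :: nat
  assumes "n \<ge> 2" and "even n" and "1 \<le> \<kappa>" and "\<kappa> < n"
  shows "(3/64) * (real (n choose (n div 2)) * 2 ^ n / (real n - real \<kappa> + 1))
           \<le> real (A_BAL_WMU 4 \<kappa> n)
       \<and> real (A_BAL_WMU 4 \<kappa> n) \<le> real (n choose (n div 2)) * 2 ^ n / (real n - real \<kappa> + 1)
       \<and> real (A_BAL_WMU 2 \<kappa> n) \<le> real (n choose (n div 2)) / (real n - real \<kappa> + 1)
       \<and> real (n choose (n div 2)) / (2 * (real n - 1)) \<le> real (A_BAL_MU 2 n)
       \<and> real (A_BAL_MU 2 n) \<le> real (n choose (n div 2)) / real n"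
proof -
  define B where "B = n choose (n div 2)"
  define t where "t = n - \<kappa> + 1"
  have "0 < \<kappa>" "0 < t" "0 < n - 1"
    using assms by (simp_all add: t_def)
  have window: "real n - real \<kappa> + 1 = real t" "real n - 1 = real (n - 1)"
    using assms(1,4) by (simp_all add: t_def of_nat_diff)
  have "A_BAL_WMU 4 \<kappa> n * t \<le> B * 2 ^ n" "A_BAL_WMU 2 \<kappa> n * t \<le> B" "A_BAL_MU 2 n * n \<le> B"
    "B \<le> 2 * (n - 1) * A_BAL_MU 2 n" "3 * (B * 2 ^ n) \<le> 64 * t * A_BAL_WMU 4 \<kappa> n"
    using A_BAL_WMU_4_upper[OF assms(2) \<open>0 < \<kappa>\<close> assms(4)]
      A_BAL_WMU_2_upper[OF assms(2) \<open>0 < \<kappa>\<close> assms(4)] A_BAL_MU_2_upper[OF assms(2,1)]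
      central_binomial_le_A_BAL_MU[OF assms(2)] A_BAL_WMU_4_lower[OF assms(2) \<open>0 < \<kappa>\<close> assms(4)]
      assms(1) by (simp_all add: B_def t_def)
  then have
    "real (A_BAL_WMU 4 \<kappa> n) * real t \<le> real B * 2 ^ n"
    "real (A_BAL_WMU 2 \<kappa> n) * real t \<le> real B"
    "real (A_BAL_MU 2 n) * real n \<le> real B"
    "real B \<le> 2 * real (n - 1) * real (A_BAL_MU 2 n)"
    "3 * (real B * 2 ^ n) \<le> 64 * real t * real (A_BAL_WMU 4 \<kappa> n)"
    by (simp_all only: of_nat_mult of_nat_power of_nat_numeral flip: of_nat_le_iff[where 'a = real])
  then show ?thesis
    using \<open>0 < t\<close> \<open>0 < n - 1\<close> unfolding window B_def[symmetric]
    by (simp add: pos_le_divide_eq pos_divide_le_eq mult.commute mult.left_commute)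
qed

end
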